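(* Let $\mathrm{H}$ be a set of Horn rules and let $\mathrm{H}'\subseteq\mathrm H$ be a fracturable subset of the dependency graph $\mathsf{DG}(\mathrm{H})$. Then $\mathrm{H}\setminus\mathrm{H}'$ permutes above $\mathrm{H}'$.
   Context: Fix a non-empty finite set $\mathtt{E}$ of edge types and a countably infinite set $\mathtt S$ of sequents (atomic labels). A g-sequent is a finite directed graph with vertices in a universe $\mathcal U$, edge relations $\mathcal{E}_a$ for $a\in\mathtt{E}$, and a labelling of vertices by sequents; it is written $\Gamma\vdash\Delta$ with $\Gamma$ the set of edge atoms $w\mathcal{E}_a u$ and $\Delta$ the set of prefixed sequents $w:S$; commas denote disjoint union. Let $\overline{\mathtt E}=\{\bar a\mid a\in\mathtt E\}$, $\bar{\bar z}=z$, $\overline{x_1\cdots x_n}=\bar x_n\cdots\bar x_1$, $\varepsilon$ the empty string. For $s=x_1\cdots x_n$, $w\mathcal{E}_s u$ abbreviates edge atoms $w\mathcal{E}_{x_1}v_1,\dots,v_{n-1}\mathcal{E}_{x_n}u$ for some vertices $v_i$, with $v\mathcal E_{\bar a}z$ meaning $z\mathcal E_a v$ and $w\mathcal E_\varepsilon u$ meaning $w=u$. A forward Horn rule $h_f$ (for $a\in\mathtt E$, string $s$) has premise $\Gamma,w\mathcal{E}_s u,w\mathcal{E}_a u\vdash\Delta$ and conclusion $\Gamma,w\mathcal{E}_s u\vdash\Delta$; a backward Horn rule $h_b$ is the same with $w\mathcal{E}_a u$ replaced by $u\mathcal{E}_a w$. Their grammars are $\mathbf{G}(h_f)=\{a\longrightarrow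 s,\bar a\longrightarrow\bar s\}$, $\mathbf{G}(h_b)=\{\bar a\longrightarrow s,a\longrightarrow\bar s\}$; for a production rule $p=x\longrightarrow t$ set $\bar p=\bar x\longrightarrow\bar t$; $(p,\bar p)$ is a production pair, and $P(\mathbf G)$ is the set of production pairs of a rule set $\mathbf G$ closed under $p\mapsto\bar p$; $P(h):=P(\mathbf G(h))$. Dependency graph: for distinct production pairs $(p,\bar p),(p',\bar p')$ with $p=x\longrightarrow s$, $p'=y\longrightarrow t$, $(p',\bar p')$ depends on $(p,\bar p)$, written $(p,\bar p)\sqsubset(p',\bar p')$, iff $s$ or $\bar s$ has the form $s_1ys_2$. $\sqsubseteq$ is the reflexive-transitive closure of $\sqsubset$. For a set $\mathrm H$ of Horn rules, $\mathsf{DG}(\mathrm H)=(\mathrm H,\sqsubseteq')$ where $h\sqsubseteq' h'$ iff $(p,\bar p)\sqsubseteq(p',\bar p')$ for $(p,\bar p)\in P(h)$, $(p',\bar p')\in P(h')$ (in the dependency relation of the union of the grammars of $\mathrm H$). In a dependency graph $(V,\sqsubseteq)$, a subset $V'\subseteq V$ is fracturable iff there are no $v\in V'$, $v'\in V\setminus V'$ with $v\sqsubseteq v'$; $V''$ is anti-fracturable iff $V''=V\setminus V'$ for some fracturable $V'$. Permutation: $\mathrm{R}_1$ permutes above $\mathrm{R}_2$ iff whenever $\mathcal{G}$ is obtained from g-sequents $\mathcal{G}_1,\dots,\mathcal{G}_n$ by an application of some $\sigma\in\mathrm{R}_2$ followed by an application of some $\rho\in\mathrm{R}_1$, then $\mathcal{G}$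 can be obtained from $\mathcal{G}_1,\dots,\mathcal{G}_n$ by applications of $\rho$ followed by an application of $\sigma$. *)

theory Defs
  imports Main "HOL-Library.Countable"
begin

(* E a = a, B a = \<bar>a (the formal inverse of the edge type a) *)
datatype 'e letter = E 'e | B 'e

fun bar :: "'e letter \<Rightarrow> 'e letter" where
  "bar (E a) = B a"
| "bar (B a) = E a"

definition barw :: "'e letter list \<Rightarrow> 'e letter list" where
  "barw s = rev (map bar s)"

(* A g-sequent  \<Gamma> \<turnstile> \<Delta> : \<Gamma> is the set of edge atoms (w, a, u) meaning w E_a u,
   \<Delta> is the set of prefixed sequents (w, S) meaning w : S. *)
type_synonym ('v, 'e, 's) gseq = "('v \<times> 'e \<times> 'v) set \<times> ('v \<times> 's) set"

definition gseq_ok :: "('v, 'e, 's) gseq \<Rightarrow> bool" where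
  "gseq_ok G \<longleftrightarrow> finite (fst G) \<and> finite (snd G)"

fun atom :: "('v \<times> 'e \<times> 'v) set \<Rightarrow> 'v \<Rightarrow> 'e letter \<Rightarrow> 'v \<Rightarrow> bool" where
  "atom \<Gamma> w (E a) v \<longleftrightarrow> (w, a, v) \<in> \<Gamma>"
| "atom \<Gamma> w (B a) v \<longleftrightarrow> (v, a, w) \<in> \<Gamma>"

fun path :: "('v \<times> 'e \<times> 'v) set \<Rightarrow> 'v \<Rightarrow> 'e letter list \<Rightarrow> 'v \<Rightarrow> bool" where
  "path \<Gamma> w [] u \<longleftrightarrow> w = u"
| "path \<Gamma> w (x # s) u \<longleftrightarrow> (\<exists>v. atom \<Gamma> w x v \<and> path \<Gamma> v s u)"

datatype 'e horn = HornF 'e "'e letter list" | HornB 'e "'e letter list"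

(* Premise  \<Gamma>, w E_s u, w E_a u \<turnstile> \<Delta>   (resp. u E_a w), conclusion  \<Gamma>, w E_s u \<turnstile> \<Delta>;
   commas are disjoint unions, so the added atom is not already in the conclusion. *)
definition horn_app :: "'e horn \<Rightarrow> ('v, 'e, 's) gseq \<Rightarrow> ('v, 'e, 's) gseq \<Rightarrow> bool" where
  "horn_app h P C \<longleftrightarrow>
     (case h of
        HornF a s \<Rightarrow> (\<exists>w u. path (fst C) w s u \<and> (w, a, u) \<notin> fst C
                              \<and> P = (insert (w, a, u) (fst C), snd C))
      | HornB a s \<Rightarrow> (\<exists>w u. path (fst C) w s u \<and> (u, a, w) \<notin> fst C
                              \<and> P = (insert (u, a, w) (fst C), snd C)))"

type_synonym 'e production = "'e letter \<times> 'e letter list"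

definition barp :: "'e production \<Rightarrow> 'e production" where
  "barp p = (bar (fst p), barw (snd p))"

fun grammar :: "'e horn \<Rightarrow> 'e production set" where
  "grammar (HornF a s) = {(E a, s), (B a, barw s)}"
| "grammar (HornB a s) = {(B a, s), (E a, barw s)}"

definition ppairs :: "'e production set \<Rightarrow> ('e production \<times> 'e production) set" where
  "ppairs G = {(p, barp p) | p. p \<in> G}"

definition ppairs_h :: "'e horn \<Rightarrow> ('e production \<times> 'e production) set" where
  "ppairs_h h = ppairs (grammar h)"

definition dep_step :: "'e production set \<Rightarrow> ('e production \<times> 'e production)
                         \<Rightarrow> ('e production \<times> 'e production) \<Rightarrow> bool" where
  "dep_step G pp pp' \<longleftrightarrow> pp \<in> ppairs G \<and> pp' \<in> ppairs G \<and> pp \<noteq> pp' \<and>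
     (fst (fst pp') \<in> set (snd (fst pp)) \<or> fst (fst pp') \<in> set (barw (snd (fst pp))))"

definition dep :: "'e production set \<Rightarrow> ('e production \<times> 'e production)
                    \<Rightarrow> ('e production \<times> 'e production) \<Rightarrow> bool" where
  "dep G = (dep_step G)\<^sup>*\<^sup>*"

definition dg_le :: "'e horn set \<Rightarrow> 'e horn \<Rightarrow> 'e horn \<Rightarrow> bool" where
  "dg_le H h h' \<longleftrightarrow> (\<exists>pp \<in> ppairs_h h. \<exists>pp' \<in> ppairs_h h'.
       dep (\<Union>g \<in> H. grammar g) pp pp')"

definition fracturable :: "'a set \<Rightarrow> ('a \<Rightarrow> 'a \<Rightarrow> bool) \<Rightarrow> 'a set \<Rightarrow> bool" where
  "fracturable V le V' \<longleftrightarrow> V' \<subseteq> V \<and> \<not> (\<exists>v \<in> V'. \<exists>v' \<in> V - V'. le v v')"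

(* R1 permutes above R2 (Horn rules are single-premise, so n = 1):
   whenever G is obtained from G1 by \<sigma> \<in> R2 followed by \<rho> \<in> R1, then G is obtained
   from G1 by an application of \<rho> followed by an application of \<sigma>. *)
definition permutes_above :: "'e horn set \<Rightarrow> 'e horn set \<Rightarrow> ('v \<times> 's) itself \<Rightarrow> bool" where
  "permutes_above R1 R2 _ \<longleftrightarrow>
     (\<forall>\<sigma> \<in> R2. \<forall>\<rho> \<in> R1. \<forall>(G1 :: ('v, 'e, 's) gseq) G' G.
        gseq_ok G1 \<and> gseq_ok G' \<and> gseq_ok G \<and> horn_app \<sigma> G1 G' \<and> horn_app \<rho> G' G
        \<longrightarrow> (\<exists>G''. gseq_ok G'' \<and> horn_app \<rho> G1 G'' \<and> horn_app \<sigma> G'' G))"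

end

theory Submission
  imports Defs
begin

text \<open>Let \<sigma> \<in> H' be applied above \<rho> \<notin> H'. The atom added by \<rho> has some edge type a. If a
  letter of the string of \<sigma> had type a, the production pair of \<rho> with left-hand side
  that letter would depend on the main production pair of \<sigma>, so \<sigma> \<sqsubseteq>' \<rho>, contradicting
  fracturability. Hence the path required by \<sigma> never uses the atom of \<rho>, it already
  exists below \<rho>, and the two rule applications can be exchanged.\<close>

fun letter_type :: "'e letter \<Rightarrow> 'e" where
  "letter_type (E a) = a"
| "letter_type (B a) = a"

fun horn_type :: "'e horn \<Rightarrow> 'e" where
  "horn_type (HornF a s) = a"
| "horn_type (HornB a s) = a"

fun horn_string :: "'e horn \<Rightarrow> 'e letter list" where
  "horn_string (HornF a s) = s"
| "horn_string (HornB a s) = s"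

fun horn_lhs :: "'e horn \<Rightarrow> 'e letter" where
  "horn_lhs (HornF a s) = E a"
| "horn_lhs (HornB a s) = B a"

fun horn_atom :: "'e horn \<Rightarrow> 'v \<Rightarrow> 'v \<Rightarrow> 'v \<times> 'e \<times> 'v" where
  "horn_atom (HornF a s) w u = (w, a, u)"
| "horn_atom (HornB a s) w u = (u, a, w)"

lemma horn_app_iff:
  "horn_app h P C \<longleftrightarrow> (\<exists>w u. path (fst C) w (horn_string h) u \<and> horn_atom h w u \<notin> fst C
     \<and> P = (insert (horn_atom h w u) (fst C), snd C))"
  by (cases h) (auto simp: horn_app_def)

lemma edge_type_horn_atom [simp]: "fst (snd (horn_atom h w u)) = horn_type h"
  by (cases h) auto

lemma path_mono: "path \<Gamma> v s z \<Longrightarrow> \<Gamma> \<subseteq> \<Gamma>' \<Longrightarrow> path \<Gamma>' v s z"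
proof (induction s arbitrary: v)
  case (Cons x s)
  then obtain y where "atom \<Gamma> v x y" "path \<Gamma> y s z" by auto
  moreover from \<open>atom \<Gamma> v x y\<close> have "atom \<Gamma>' v x y"
    using Cons.prems(2) by (cases x) auto
  ultimately show ?case using Cons.IH Cons.prems(2) by auto
qed simp

lemma path_insert_other_type:
  assumes "path (insert e \<Gamma>) v s z" and "\<forall>x \<in> set s. letter_type x \<noteq> fst (snd e)"
  shows "path \<Gamma> v s z"
  using assms
proof (induction s arbitrary: v)
  case (Cons x s)
  then obtain y where y: "atom (insert e \<Gamma>) v x y" "path (insert e \<Gamma>) y s z" by auto
  from y(1) have "atom \<Gamma> v x y"
    using Cons.prems(2) by (cases x; cases e) auto
  then show ?case using Cons.IH Cons.prems(2) y(2) by auto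
qed simp

lemma lhs_string_in_grammar: "(horn_lhs h, horn_string h) \<in> grammar h"
  by (cases h) auto

lemma grammar_has_lhs_of_type:
  "letter_type x = horn_type h \<Longrightarrow> \<exists>p \<in> grammar h. fst p = x"
  by (cases h; cases x) auto

lemma dg_le_if_string_mentions_type:
  assumes "\<sigma> \<in> H" "\<rho> \<in> H" "x \<in> set (horn_string \<sigma>)" "letter_type x = horn_type \<rho>"
  shows "dg_le H \<sigma> \<rho>"
proof -
  let ?G = "\<Union>g \<in> H. grammar g"
  define p where "p = (horn_lhs \<sigma>, horn_string \<sigma>)"
  obtain p' where p': "p' \<in> grammar \<rho>" "fst p' = x"
    using grammar_has_lhs_of_type[OF assms(4)] by blast
  have p: "p \<in> grammar \<sigma>"
    unfolding p_def by (rule lhs_string_in_grammar)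
  have "dep ?G (p, barp p) (p', barp p')"
  proof (cases "(p, barp p) = (p', barp p')")
    case False
    have "(p, barp p) \<in> ppairs ?G" "(p', barp p') \<in> ppairs ?G"
      unfolding ppairs_def using p p' assms(1,2) by blast+
    then have "dep_step ?G (p, barp p) (p', barp p')"
      unfolding dep_step_def using False p' assms(3) p_def by auto
    then show ?thesis unfolding dep_def by auto
  qed (simp add: dep_def)
  moreover have "(p, barp p) \<in> ppairs_h \<sigma>" "(p', barp p') \<in> ppairs_h \<rho>"
    unfolding ppairs_h_def ppairs_def using p p' by blast+
  ultimately show ?thesis unfolding dg_le_def by blast
qed

lemma horn_app_swap:
  assumes \<sigma>: "horn_app \<sigma> G1 G'" and \<rho>: "horn_app \<rho> G' G" and "gseq_ok G"
    and independent: "\<forall>x \<in> set (horn_string \<sigma>). letter_type x \<noteq> horn_type \<rho>"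
  shows "\<exists>G''. gseq_ok G'' \<and> horn_app \<rho> G1 G'' \<and> horn_app \<sigma> G'' G"
proof -
  from \<sigma> obtain w u where wu: "path (fst G') w (horn_string \<sigma>) u" "horn_atom \<sigma> w u \<notin> fst G'"
    "G1 = (insert (horn_atom \<sigma> w u) (fst G'), snd G')"
    unfolding horn_app_iff by blast
  from \<rho> obtain w' u' where wu': "path (fst G) w' (horn_string \<rho>) u'"
    "horn_atom \<rho> w' u' \<notin> fst G" "G' = (insert (horn_atom \<rho> w' u') (fst G), snd G)"
    unfolding horn_app_iff by blast
  have path_below: "path (fst G) w (horn_string \<sigma>) u"
    using path_insert_other_type[of "horn_atom \<rho> w' u'"] wu(1) wu'(3) independent by auto
  define G'' where "G'' = (insert (horn_atom \<sigma> w u) (fst G), snd G)"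
  have "gseq_ok G''"
    using \<open>gseq_ok G\<close> unfolding gseq_ok_def G''_def by auto
  moreover have "horn_app \<rho> G1 G''"
    unfolding horn_app_iff G''_def
    using path_mono[OF wu'(1)] wu wu' by (intro exI[of _ w'] exI[of _ u']) auto
  moreover have "horn_app \<sigma> G'' G"
    unfolding horn_app_iff G''_def using wu wu' path_below by auto
  ultimately show ?thesis by blast
qed

theorem mainTheorem5:
  fixes H H' :: "('e :: finite) horn set"
  assumes "infinite (UNIV :: ('s :: countable) set)"
    and "fracturable H (dg_le H) H'"
  shows "permutes_above (H - H') H' TYPE('v \<times> 's)"
  unfolding permutes_above_def
proof (intro ballI allI impI)
  fix \<sigma> \<rho> and G1 G' G :: "('v, 'e, 's) gseq"
  assume \<sigma>: "\<sigma> \<in> H'" and \<rho>: "\<rho> \<in> H - H'"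
    and apps: "gseq_ok G1 \<and> gseq_ok G' \<and> gseq_ok G \<and> horn_app \<sigma> G1 G' \<and> horn_app \<rho> G' G"
  from \<sigma> \<rho> assms(2) have "\<sigma> \<in> H" and "\<not> dg_le H \<sigma> \<rho>"
    unfolding fracturable_def by blast+
  then have "\<forall>x \<in> set (horn_string \<sigma>). letter_type x \<noteq> horn_type \<rho>"
    using dg_le_if_string_mentions_type \<rho> by blast
  with apps show "\<exists>G''. gseq_ok G'' \<and> horn_app \<rho> G1 G'' \<and> horn_app \<sigma> G'' G"
    using horn_app_swap by blast
qed

end
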